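(* Let $(M,g)$ be a Riemannian manifold without boundary, isometrically embedded in $\mathbb{R}^N$, carrying a foliation given by an integrable subbundle $E\subset TM$, with mean curvature $H$ of the leaves (as defined below). Then for every $v\in\mathbb{R}^N$, $$\langle H,v\rangle=-\mathrm{div}_E(\tilde P(v)),$$ where $\tilde P(v)$ denotes the section $m\mapsto \tilde P(m)v$ of $E$.
   Context: For $m\in M$, $P(m):\mathbb{R}^N\to T_mM$ is orthogonal projection, $\pi:TM\to E$ is orthogonal projection, and $\tilde P=\pi\circ P$ (so $\tilde P(m):\mathbb{R}^N\to E_m$ is orthogonal projection). $\nabla$ is the Levi-Civita connection, $\nabla^E_VY=\pi\nabla_VY$ for $Y\in\Gamma(E)$, and $\mathrm{div}_E Y=\mathrm{Tr}_E\,g(\nabla^E_{\cdot}Y,\cdot)$ (trace over $E$). Let $\nu(E)=\{(x,v): x\in M,\ v\in\mathbb{R}^N,\ v\perp E_x\}$. The second fundamental form is the unique $\alpha\in\Gamma(E^*\otimes E^*\otimes\nu(E))$ with $\langle\alpha(X,Y),N\rangle=g(\tilde P\,dN(X),Y)$ for all $X,Y\in\Gamma(E)$ and $N\in\Gamma(\nu(E))$ (here $dN$ is the derivative of $N$ as an $\mathbb{R}^N$-valued function). The mean curvature is $H=\mathrm{Tr}_E(\alpha)$; $\langle\cdot,\cdot\rangle$ is the Euclidean inner product. *)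

theory Defs
  imports "HOL-Analysis.Analysis"
begin

text \<open>Ambient space: R^N is modelled as real^'n with the Euclidean inner product.\<close>

primrec Ck_on :: "nat \<Rightarrow> 'a::real_normed_vector set \<Rightarrow> ('a \<Rightarrow> 'b::real_normed_vector) \<Rightarrow> bool" where
  "Ck_on 0 U f = continuous_on U f"
| "Ck_on (Suc k) U f =
     (\<exists>f'. (\<forall>x\<in>U. (f has_derivative f' x) (at x)) \<and> (\<forall>v. Ck_on k U (\<lambda>x. f' x v)))"

definition smooth_on :: "'a::real_normed_vector set \<Rightarrow> ('a \<Rightarrow> 'b::real_normed_vector) \<Rightarrow> bool" where
  "smooth_on U f \<longleftrightarrow> (\<forall>k. Ck_on k U f)"

definition embedded_submanifold :: "(real^'n) set \<Rightarrow> nat \<Rightarrow> bool" where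
  "embedded_submanifold M d \<longleftrightarrow>
     (\<forall>p\<in>M. \<exists>U U' (\<Phi>::real^'n \<Rightarrow> real^'n) \<Psi> L.
        open U \<and> open U' \<and> p \<in> U \<and> subspace L \<and> dim L = d \<and>
        smooth_on U \<Phi> \<and> smooth_on U' \<Psi> \<and> \<Phi> ` U = U' \<and>
        (\<forall>x\<in>U. \<Psi> (\<Phi> x) = x) \<and> (\<forall>y\<in>U'. \<Phi> (\<Psi> y) = y) \<and>
        \<Phi> ` (M \<inter> U) = U' \<inter> L)"

definition curve_in :: "(real^'n) set \<Rightarrow> (real^'n) \<Rightarrow> (real \<Rightarrow> real^'n) \<Rightarrow> real \<Rightarrow> bool" where
  "curve_in M p \<gamma> \<epsilon> \<longleftrightarrow> \<epsilon> > 0 \<and> smooth_on {-\<epsilon><..<\<epsilon>} \<gamma> \<and> \<gamma> ` {-\<epsilon><..<\<epsilon>} \<subseteq> M \<and> \<gamma> 0 = p"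

definition tangent_space :: "(real^'n) set \<Rightarrow> real^'n \<Rightarrow> (real^'n) set" where
  "tangent_space M p = {v. \<exists>\<gamma> \<epsilon>. curve_in M p \<gamma> \<epsilon> \<and> (\<gamma> has_vector_derivative v) (at 0)}"

definition smooth_on_M :: "(real^'n) set \<Rightarrow> (real^'n \<Rightarrow> 'b::real_normed_vector) \<Rightarrow> bool" where
  "smooth_on_M M f \<longleftrightarrow>
     (\<forall>p\<in>M. \<exists>U F. open U \<and> p \<in> U \<and> smooth_on U F \<and> (\<forall>x\<in>M \<inter> U. F x = f x))"

definition dM :: "(real^'n) set \<Rightarrow> (real^'n \<Rightarrow> 'b::real_normed_vector) \<Rightarrow> real^'n \<Rightarrow> real^'n \<Rightarrow> 'b" where
  "dM M f p v = (THE w. \<forall>\<gamma> \<epsilon>. curve_in M p \<gamma> \<epsilon> \<and> (\<gamma> has_vector_derivative v) (at 0)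
                     \<longrightarrow> ((f \<circ> \<gamma>) has_vector_derivative w) (at 0))"

definition vector_field :: "(real^'n) set \<Rightarrow> (real^'n \<Rightarrow> real^'n) \<Rightarrow> bool" where
  "vector_field M X \<longleftrightarrow> smooth_on_M M X \<and> (\<forall>p\<in>M. X p \<in> tangent_space M p)"

definition proj_onto :: "(real^'n) set \<Rightarrow> real^'n \<Rightarrow> real^'n" where
  "proj_onto S v = (THE w. w \<in> S \<and> (\<forall>s\<in>S. (v - w) \<bullet> s = 0))"

definition onb :: "(real^'n) set \<Rightarrow> (real^'n) set \<Rightarrow> bool" where
  "onb S B \<longleftrightarrow> finite B \<and> B \<subseteq> S \<and> span B = S \<and> (\<forall>b\<in>B. norm b = 1) \<and> pairwise orthogonal B"

definition subbundle :: "(real^'n) set \<Rightarrow> (real^'n \<Rightarrow> (real^'n) set) \<Rightarrow> bool" where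
  "subbundle M E \<longleftrightarrow>
     (\<forall>p\<in>M. subspace (E p) \<and> E p \<subseteq> tangent_space M p) \<and>
     (\<forall>p\<in>M. \<exists>U k (X :: nat \<Rightarrow> real^'n \<Rightarrow> real^'n). open U \<and> p \<in> U \<and>
        (\<forall>i<k. vector_field M (X i)) \<and>
        (\<forall>q\<in>M \<inter> U. span {X i q | i. i < k} = E q \<and> dim (E q) = k))"

definition section_of :: "(real^'n) set \<Rightarrow> (real^'n \<Rightarrow> (real^'n) set) \<Rightarrow> (real^'n \<Rightarrow> real^'n) \<Rightarrow> bool" where
  "section_of M E X \<longleftrightarrow> smooth_on_M M X \<and> (\<forall>p\<in>M. X p \<in> E p)"

definition normal_section :: "(real^'n) set \<Rightarrow> (real^'n \<Rightarrow> (real^'n) set) \<Rightarrow> (real^'n \<Rightarrow> real^'n) \<Rightarrow> bool" where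
  "normal_section M E N \<longleftrightarrow> smooth_on_M M N \<and> (\<forall>p\<in>M. \<forall>e\<in>E p. N p \<bullet> e = 0)"

definition lie_bracket :: "(real^'n) set \<Rightarrow> (real^'n \<Rightarrow> real^'n) \<Rightarrow> (real^'n \<Rightarrow> real^'n) \<Rightarrow> real^'n \<Rightarrow> real^'n" where
  "lie_bracket M X Y p = dM M Y p (X p) - dM M X p (Y p)"

text \<open>Integrable (= involutive, Frobenius) subbundle.\<close>
definition involutive_subbundle :: "(real^'n) set \<Rightarrow> (real^'n \<Rightarrow> (real^'n) set) \<Rightarrow> bool" where
  "involutive_subbundle M E \<longleftrightarrow> (\<forall>X Y. section_of M E X \<and> section_of M E Y \<longrightarrow>
       (\<forall>p\<in>M. lie_bracket M X Y p \<in> E p))"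

definition levi_civita :: "(real^'n) set \<Rightarrow>
   ((real^'n \<Rightarrow> real^'n) \<Rightarrow> (real^'n \<Rightarrow> real^'n) \<Rightarrow> real^'n \<Rightarrow> real^'n) \<Rightarrow> bool" where
  "levi_civita M nabla \<longleftrightarrow>
     (\<forall>X Y. vector_field M X \<and> vector_field M Y \<longrightarrow> vector_field M (nabla X Y)) \<and>
     (\<forall>X1 X2 Y f h. vector_field M X1 \<and> vector_field M X2 \<and> vector_field M Y \<and>
         smooth_on_M M (f::real^'n \<Rightarrow> real) \<and> smooth_on_M M (h::real^'n \<Rightarrow> real) \<longrightarrow>
        (\<forall>p\<in>M. nabla (\<lambda>q. f q *\<^sub>R X1 q + h q *\<^sub>R X2 q) Y p
                 = f p *\<^sub>R nabla X1 Y p + h p *\<^sub>R nabla X2 Y p)) \<and>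
     (\<forall>X Y1 Y2 a b. vector_field M X \<and> vector_field M Y1 \<and> vector_field M Y2 \<longrightarrow>
        (\<forall>p\<in>M. nabla X (\<lambda>q. a *\<^sub>R Y1 q + b *\<^sub>R Y2 q) p
                 = a *\<^sub>R nabla X Y1 p + b *\<^sub>R nabla X Y2 p)) \<and>
     (\<forall>X Y f. vector_field M X \<and> vector_field M Y \<and> smooth_on_M M (f::real^'n \<Rightarrow> real) \<longrightarrow>
        (\<forall>p\<in>M. nabla X (\<lambda>q. f q *\<^sub>R Y q) p = dM M f p (X p) *\<^sub>R Y p + f p *\<^sub>R nabla X Y p)) \<and>
     (\<forall>X Y. vector_field M X \<and> vector_field M Y \<longrightarrow>
        (\<forall>p\<in>M. nabla X Y p - nabla Y X p = lie_bracket M X Y p)) \<and>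
     (\<forall>X Y Z. vector_field M X \<and> vector_field M Y \<and> vector_field M Z \<longrightarrow>
        (\<forall>p\<in>M. dM M (\<lambda>q. Y q \<bullet> Z q) p (X p) = nabla X Y p \<bullet> Z p + Y p \<bullet> nabla X Z p))"

text \<open>nabla^E_V Y = pi (nabla_V Y); div_E Y (m) = sum over an orthonormal basis e_i of E_m of
  g(nabla^E_{e_i} Y, e_i), where nabla_{e_i} Y (m) is computed with any vector field
  taking the value e_i at m (the connection is tensorial in its first argument).\<close>
definition div_E :: "(real^'n) set \<Rightarrow> (real^'n \<Rightarrow> (real^'n) set) \<Rightarrow>
   ((real^'n \<Rightarrow> real^'n) \<Rightarrow> (real^'n \<Rightarrow> real^'n) \<Rightarrow> real^'n \<Rightarrow> real^'n) \<Rightarrow>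
   (real^'n \<Rightarrow> real^'n) \<Rightarrow> real^'n \<Rightarrow> real" where
  "div_E M E nabla Y m =
     (let B = (SOME B. onb (E m) B) in
      \<Sum>b\<in>B. proj_onto (E m) (nabla (SOME X. vector_field M X \<and> X m = b) Y m) \<bullet> b)"

definition second_fundamental_form :: "(real^'n) set \<Rightarrow> (real^'n \<Rightarrow> (real^'n) set) \<Rightarrow>
   (real^'n \<Rightarrow> real^'n \<Rightarrow> real^'n \<Rightarrow> real^'n) \<Rightarrow> bool" where
  "second_fundamental_form M E alpha \<longleftrightarrow>
     (\<forall>m\<in>M. \<forall>x\<in>E m. \<forall>y\<in>E m. \<forall>e\<in>E m. alpha m x y \<bullet> e = 0) \<and>
     (\<forall>m\<in>M. \<forall>y\<in>E m. linear (\<lambda>x. alpha m x y)) \<and>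
     (\<forall>m\<in>M. \<forall>x\<in>E m. linear (\<lambda>y. alpha m x y)) \<and>
     (\<forall>X Y. section_of M E X \<and> section_of M E Y \<longrightarrow> smooth_on_M M (\<lambda>p. alpha p (X p) (Y p))) \<and>
     (\<forall>X Y N. section_of M E X \<and> section_of M E Y \<and> normal_section M E N \<longrightarrow>
        (\<forall>m\<in>M. alpha m (X m) (Y m) \<bullet> N m = proj_onto (E m) (dM M N m (X m)) \<bullet> Y m))"

definition mean_curvature :: "(real^'n \<Rightarrow> (real^'n) set) \<Rightarrow>
   (real^'n \<Rightarrow> real^'n \<Rightarrow> real^'n \<Rightarrow> real^'n) \<Rightarrow> real^'n \<Rightarrow> real^'n" where
  "mean_curvature E alpha m = (let B = (SOME B. onb (E m) B) in \<Sum>b\<in>B. alpha m b b)"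

end

theory Submission
  imports Defs
begin

text \<open>Write \<open>Y = P\<^sup>~ v\<close> and \<open>N = v - Y\<close>, a section of \<open>\<nu>(E)\<close>; then \<open>dN = -dY\<close> along \<open>M\<close>.
  For \<open>b \<in> E\<^sub>m\<close>, extend \<open>b\<close> to the section \<open>P\<^sup>~ b\<close>. As \<open>\<alpha>\<close> takes values in \<open>\<nu>(E)\<close>,
  \<open>\<langle>\<alpha>(b,b), v\<rangle> = \<langle>\<alpha>(b,b), N\<rangle> = g(P\<^sup>~ dN(b), b) = -\<langle>dY(b), b\<rangle>\<close>.
  On the other hand, for any tangent field \<open>X\<close>, torsion-freeness gives
  \<open>\<nabla>\<^sub>X Y = \<nabla>\<^sub>Y X + dY(X) - dX(Y)\<close>, and metric compatibility applied to \<open>\<langle>X,X\<rangle>\<close> gives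
  \<open>\<langle>\<nabla>\<^sub>Y X, X\<rangle> = \<langle>dX(Y), X\<rangle>\<close>, so \<open>g(\<nabla>\<^sub>X Y, X) = \<langle>dY(X), X\<rangle>\<close>. Summing over an
  orthonormal basis of \<open>E\<^sub>m\<close> gives the identity.

  What is needed is that \<open>P\<^sup>~ v\<close> is smooth, which follows by applying Gram--Schmidt
  to a local frame of \<open>E\<close> extended to an open set of \<open>\<real>\<^sup>N\<close>.\<close>

lemma orthogonal_projection_unique:
  fixes S :: "(real^'n) set"
  assumes "subspace S"
    and "w1 \<in> S" "\<forall>s\<in>S. (v - w1) \<bullet> s = 0"
    and "w2 \<in> S" "\<forall>s\<in>S. (v - w2) \<bullet> s = 0"
  shows "w1 = w2"
proof -
  have "w1 - w2 \<in> S" using assms by (simp add: subspace_diff)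
  then have "(v - w2) \<bullet> (w1 - w2) - (v - w1) \<bullet> (w1 - w2) = 0" using assms by simp
  then have "(w1 - w2) \<bullet> (w1 - w2) = 0" by (simp add: inner_diff_left)
  then show ?thesis by simp
qed

lemma proj_onto_eq:
  fixes S :: "(real^'n) set"
  assumes "subspace S" "w \<in> S" "\<forall>s\<in>S. (v - w) \<bullet> s = 0"
  shows "proj_onto S v = w"
  unfolding proj_onto_def
  using assms orthogonal_projection_unique[OF assms(1)] by (intro the_equality) blast+

lemma proj_onto_in_orthogonal:
  fixes S :: "(real^'n) set"
  assumes "subspace S"
  shows "proj_onto S v \<in> S \<and> (\<forall>s\<in>S. (v - proj_onto S v) \<bullet> s = 0)"
proof -
  obtain y z where "y \<in> span S" "\<And>w. w \<in> span S \<Longrightarrow> orthogonal z w" "v = y + z"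
    using orthogonal_subspace_decomp_exists by blast
  moreover have "span S = S" using assms by (simp add: span_eq_iff)
  ultimately have y: "y \<in> S" "\<forall>s\<in>S. (v - y) \<bullet> s = 0" by (auto simp: orthogonal_def)
  then show ?thesis using proj_onto_eq[OF assms y] by simp
qed

lemma proj_onto_inner:
  fixes S :: "(real^'n) set"
  assumes "subspace S" "b \<in> S"
  shows "proj_onto S v \<bullet> b = v \<bullet> b"
  using proj_onto_in_orthogonal[OF assms(1), of v] assms(2) by (simp add: inner_diff_left)

lemma proj_onto_self:
  fixes S :: "(real^'n) set"
  assumes "subspace S" "b \<in> S"
  shows "proj_onto S b = b"
  using assms by (intro proj_onto_eq) simp_all

lemma inner_residual_orthonormal:
  fixes e :: "nat \<Rightarrow> 'a::real_inner"
  assumes "\<forall>j<k. \<forall>l<k. e j \<bullet> e l = (if j = l then 1 else 0)" "l < k"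
  shows "(x - (\<Sum>j<k. (x \<bullet> e j) *\<^sub>R e j)) \<bullet> e l = 0"
proof -
  have "(\<Sum>j<k. (x \<bullet> e j) *\<^sub>R e j) \<bullet> e l = (\<Sum>j<k. (x \<bullet> e j) * (e j \<bullet> e l))"
    by (simp add: inner_sum_left)
  also have "\<dots> = (\<Sum>j<k. if j = l then x \<bullet> e j else 0)"
    using assms by (intro sum.cong) auto
  also have "\<dots> = x \<bullet> e l" using assms(2) by (simp add: sum.delta)
  finally show ?thesis by (simp add: inner_diff_left)
qed

lemma proj_onto_orthonormal_sum:
  fixes e :: "nat \<Rightarrow> real^'n"
  assumes "subspace S" "span (e ` {..<k}) = S"
    and "\<forall>j<k. \<forall>l<k. e j \<bullet> e l = (if j = l then 1 else 0)"
  shows "proj_onto S w = (\<Sum>j<k. (w \<bullet> e j) *\<^sub>R e j)"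
proof (rule proj_onto_eq[OF assms(1)])
  show "(\<Sum>j<k. (w \<bullet> e j) *\<^sub>R e j) \<in> S"
    unfolding assms(2)[symmetric] by (intro span_sum span_scale span_base) auto
  have "orthogonal (w - (\<Sum>j<k. (w \<bullet> e j) *\<^sub>R e j)) y" if "y \<in> e ` {..<k}" for y
    using that inner_residual_orthonormal[OF assms(3)] unfolding orthogonal_def by blast
  then have "orthogonal (w - (\<Sum>j<k. (w \<bullet> e j) *\<^sub>R e j)) s" if "s \<in> span (e ` {..<k})" for s
    using that orthogonal_to_span by blast
  then show "\<forall>s\<in>S. (w - (\<Sum>j<k. (w \<bullet> e j) *\<^sub>R e j)) \<bullet> s = 0"
    using assms(2) by (auto simp: orthogonal_def)
qed

lemma onb_some:
  fixes S :: "(real^'n) set"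
  assumes "subspace S"
  shows "onb S (SOME B. onb S B)"
proof (rule someI_ex)
  obtain B where "B \<subseteq> S" "pairwise orthogonal B" "\<And>x. x \<in> B \<Longrightarrow> norm x = 1"
    "independent B" "span B = S"
    using orthonormal_basis_subspace[OF assms] by metis
  then show "\<exists>B. onb S B" unfolding onb_def using independent_imp_finite by blast
qed

lemma not_in_span_initial_segment:
  fixes b :: "nat \<Rightarrow> 'a::euclidean_space"
  assumes "span (b ` {..<k}) = S" "dim S = k" "i < k"
  shows "b i \<notin> span (b ` {..<i})"
proof -
  let ?B = "b ` {..<k}"
  have "S \<subseteq> span ?B" "?B \<subseteq> S" using assms(1) span_superset[of ?B] by auto
  moreover have "card ?B \<le> k" using card_image_le[of "{..<k}" b] by simp
  ultimately have card: "card ?B = k" and indep: "independent ?B"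
    using dim_le_card[of S ?B] card_le_dim_spanning[of ?B S] assms(2) by auto
  have "inj_on b {..<k}" using card by (intro eq_card_imp_inj_on) simp_all
  then have "b ` {..<i} \<subseteq> ?B - {b i}" using assms(3) by (auto simp: inj_on_def)
  moreover have "b i \<notin> span (?B - {b i})" using indep assms(3) unfolding dependent_def by blast
  ultimately show ?thesis using span_mono by blast
qed

lemma span_insert_scaleR:
  assumes "c \<noteq> 0"
  shows "span (insert (c *\<^sub>R x) S) = span (insert x S)"
proof -
  have "\<exists>k'. y - k' *\<^sub>R x \<in> span S" if "y - k *\<^sub>R (c *\<^sub>R x) \<in> span S" for y k
    using that by (intro exI[of _ "k * c"]) simp
  moreover have "\<exists>k'. y - k' *\<^sub>R (c *\<^sub>R x) \<in> span S" if "y - k *\<^sub>R x \<in> span S" for y k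
    using that assms by (intro exI[of _ "k / c"]) simp
  ultimately show ?thesis unfolding span_insert by blast
qed

lemma Ck_on_Suc_imp: "Ck_on (Suc k) U f \<Longrightarrow> Ck_on k U f"
proof (induction k arbitrary: f)
  case 0
  then obtain f' where "\<forall>x\<in>U. (f has_derivative f' x) (at x)" by auto
  then show ?case by (auto intro: continuous_at_imp_continuous_on has_derivative_continuous)
next
  case (Suc k)
  then show ?case by auto
qed

lemma Ck_on_continuous: "Ck_on k U f \<Longrightarrow> continuous_on U f"
  by (cases k) (auto intro: continuous_at_imp_continuous_on has_derivative_continuous)

lemma Ck_on_subset: "Ck_on k U f \<Longrightarrow> V \<subseteq> U \<Longrightarrow> Ck_on k V f"
  by (induction k arbitrary: f) (auto intro: continuous_on_subset, blast)

lemma Ck_on_const: "Ck_on k U (\<lambda>x. c)"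
  by (induction k arbitrary: c) (auto intro!: exI[of _ "\<lambda>x v. 0"])

lemma Ck_on_add: "Ck_on k U f \<Longrightarrow> Ck_on k U g \<Longrightarrow> Ck_on k U (\<lambda>x. f x + g x)"
proof (induction k arbitrary: f g)
  case 0
  then show ?case by (simp add: continuous_on_add)
next
  case (Suc k)
  then obtain f' g' where
    "\<forall>x\<in>U. (f has_derivative f' x) (at x)" "\<forall>v. Ck_on k U (\<lambda>x. f' x v)"
    "\<forall>x\<in>U. (g has_derivative g' x) (at x)" "\<forall>v. Ck_on k U (\<lambda>x. g' x v)"
    by auto
  with Suc.IH show ?case
    by (auto intro!: exI[of _ "\<lambda>x v. f' x v + g' x v"] has_derivative_add)
qed

lemma Ck_on_bilinear:
  fixes f :: "'a::real_normed_vector \<Rightarrow> 'b::real_normed_vector" and g :: "'a \<Rightarrow> 'c::real_normed_vector"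
    and prod :: "'b \<Rightarrow> 'c \<Rightarrow> 'd::real_normed_vector"
  assumes "bounded_bilinear prod"
  shows "Ck_on k U f \<Longrightarrow> Ck_on k U g \<Longrightarrow> Ck_on k U (\<lambda>x. prod (f x) (g x))"
proof (induction k arbitrary: f g)
  case 0
  then show ?case using bounded_bilinear.continuous_on[OF assms] by auto
next
  case (Suc k)
  then obtain f' g' where
    f': "\<forall>x\<in>U. (f has_derivative f' x) (at x)" "\<forall>v. Ck_on k U (\<lambda>x. f' x v)" and
    g': "\<forall>x\<in>U. (g has_derivative g' x) (at x)" "\<forall>v. Ck_on k U (\<lambda>x. g' x v)"
    by auto
  have "Ck_on k U f" "Ck_on k U g" using Suc.prems by (blast intro: Ck_on_Suc_imp)+
  then have "Ck_on k U (\<lambda>x. prod (f x) (g' x v) + prod (f' x v) (g x))" for v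
    using f' g' Suc.IH by (intro Ck_on_add) auto
  moreover have "((\<lambda>x. prod (f x) (g x)) has_derivative
      (\<lambda>v. prod (f x) (g' x v) + prod (f' x v) (g x))) (at x)" if "x \<in> U" for x
    using that f' g' bounded_bilinear.FDERIV[OF assms] by blast
  ultimately show ?case
    by (auto intro!: exI[of _ "\<lambda>x v. prod (f x) (g' x v) + prod (f' x v) (g x)"])
qed

lemma Ck_on_sum:
  "finite I \<Longrightarrow> (\<And>i. i \<in> I \<Longrightarrow> Ck_on k U (f i)) \<Longrightarrow> Ck_on k U (\<lambda>x. \<Sum>i\<in>I. f i x)"
  by (induction I rule: finite_induct) (auto simp: Ck_on_const intro!: Ck_on_add)

lemma Ck_on_powr:
  "Ck_on k U f \<Longrightarrow> \<forall>x\<in>U. f x > (0::real) \<Longrightarrow> Ck_on k U (\<lambda>x. f x powr r)"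
proof (induction k arbitrary: f r)
  case 0
  then show ?case by (auto intro!: continuous_intros)
next
  case (Suc k)
  then obtain f' where f': "\<forall>x\<in>U. (f has_derivative f' x) (at x)" "\<forall>v. Ck_on k U (\<lambda>x. f' x v)"
    by auto
  have "((\<lambda>x. f x powr r) has_derivative (\<lambda>v. f' x v * (r * f x powr (r - 1)))) (at x)"
    if "x \<in> U" for x
    using that f' Suc.prems(2) has_real_derivative_powr[of "f x" r]
      DERIV_compose_FDERIV[where f="\<lambda>z. z powr r" and g=f and x=x and s=UNIV] by auto
  moreover have "Ck_on k U (\<lambda>x. f' x v * (r * f x powr (r - 1)))" for v
  proof -
    have "Ck_on k U (\<lambda>x. f x powr (r - 1))"
      using Suc.IH Suc.prems by (blast intro: Ck_on_Suc_imp)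
    then show ?thesis
      using f'(2) by (intro Ck_on_bilinear[OF bounded_bilinear_mult] Ck_on_const) auto
  qed
  ultimately show ?case
    by (auto intro!: exI[of _ "\<lambda>x v. f' x v * (r * f x powr (r - 1))"])
qed

lemma smooth_on_const: "smooth_on U (\<lambda>x. c)"
  unfolding smooth_on_def by (simp add: Ck_on_const)

lemma smooth_on_add: "smooth_on U f \<Longrightarrow> smooth_on U g \<Longrightarrow> smooth_on U (\<lambda>x. f x + g x)"
  unfolding smooth_on_def by (simp add: Ck_on_add)

lemma smooth_on_bilinear:
  fixes f :: "'a::real_normed_vector \<Rightarrow> 'b::real_normed_vector" and g :: "'a \<Rightarrow> 'c::real_normed_vector"
    and prod :: "'b \<Rightarrow> 'c \<Rightarrow> 'd::real_normed_vector"
  shows "bounded_bilinear prod \<Longrightarrow> smooth_on U f \<Longrightarrow> smooth_on U g \<Longrightarrow>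
    smooth_on U (\<lambda>x. prod (f x) (g x))"
  unfolding smooth_on_def by (simp add: Ck_on_bilinear)

lemma smooth_on_scaleR: "smooth_on U f \<Longrightarrow> smooth_on U g \<Longrightarrow> smooth_on U (\<lambda>x. f x *\<^sub>R g x)"
  by (rule smooth_on_bilinear[OF bounded_bilinear_scaleR])

lemma smooth_on_inner: "smooth_on U f \<Longrightarrow> smooth_on U g \<Longrightarrow> smooth_on U (\<lambda>x. f x \<bullet> g x)"
  by (rule smooth_on_bilinear[OF bounded_bilinear_inner])

lemma smooth_on_diff: "smooth_on U f \<Longrightarrow> smooth_on U g \<Longrightarrow> smooth_on U (\<lambda>x. f x - g x)"
proof -
  assume "smooth_on U f" "smooth_on U g"
  then have "smooth_on U (\<lambda>x. f x + (-1::real) *\<^sub>R g x)"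
    by (intro smooth_on_add smooth_on_scaleR smooth_on_const)
  then show ?thesis by simp
qed

lemma smooth_on_sum:
  "finite I \<Longrightarrow> (\<And>i. i \<in> I \<Longrightarrow> smooth_on U (f i)) \<Longrightarrow> smooth_on U (\<lambda>x. \<Sum>i\<in>I. f i x)"
  unfolding smooth_on_def by (simp add: Ck_on_sum)

lemma smooth_on_powr:
  "smooth_on U f \<Longrightarrow> \<forall>x\<in>U. f x > (0::real) \<Longrightarrow> smooth_on U (\<lambda>x. f x powr r)"
  unfolding smooth_on_def by (simp add: Ck_on_powr)

lemma smooth_on_subset: "smooth_on U f \<Longrightarrow> V \<subseteq> U \<Longrightarrow> smooth_on V f"
  unfolding smooth_on_def by (blast intro: Ck_on_subset)

lemma smooth_on_continuous_on: "smooth_on U f \<Longrightarrow> continuous_on U f"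
  unfolding smooth_on_def by (blast intro: Ck_on_continuous)

lemma smooth_on_has_derivative: "smooth_on U f \<Longrightarrow> x \<in> U \<Longrightarrow> \<exists>f'. (f has_derivative f' x) (at x)"
  unfolding smooth_on_def by (metis Ck_on.simps(2))

section \<open>Derivatives along \<open>M\<close>\<close>

lemma curve_comp_has_vector_derivative:
  fixes F :: "real^'n \<Rightarrow> 'b::real_normed_vector"
  assumes "open U" "p \<in> U" "\<forall>x\<in>M \<inter> U. F x = f x" "(F has_derivative F') (at p)"
    and "curve_in M p \<gamma> \<epsilon>" "(\<gamma> has_vector_derivative w) (at 0)"
  shows "((f \<circ> \<gamma>) has_vector_derivative F' w) (at 0)"
proof -
  have \<gamma>: "\<epsilon> > 0" "\<gamma> ` {-\<epsilon><..<\<epsilon>} \<subseteq> M" "\<gamma> 0 = p" using assms(5) unfolding curve_in_def by auto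
  have "isCont \<gamma> 0" using has_vector_derivative_continuous[OF assms(6)] .
  then have "eventually (\<lambda>t. \<gamma> t \<in> U) (at 0)"
    using assms(1,2) \<gamma>(3) unfolding isCont_def tendsto_def by auto
  then obtain d where d: "d > 0" "\<And>t. t \<noteq> 0 \<Longrightarrow> dist t 0 < d \<Longrightarrow> \<gamma> t \<in> U"
    unfolding eventually_at by auto
  have "linear F'" using assms(4) has_derivative_linear by blast
  then have "F' \<circ> (\<lambda>t. t *\<^sub>R w) = (\<lambda>t. t *\<^sub>R F' w)" by (auto simp: linear_scale)
  then have "((F \<circ> \<gamma>) has_vector_derivative F' w) (at 0)"
    using diff_chain_at[of \<gamma> "\<lambda>t. t *\<^sub>R w" 0 F F'] assms(4,6) \<gamma>(3)
    unfolding has_vector_derivative_def by simp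
  then show ?thesis
  proof (rule has_vector_derivative_transform_within[where d="min d \<epsilon>"])
    fix t :: real assume "t \<in> UNIV" "dist t 0 < min d \<epsilon>"
    then have "\<gamma> t \<in> U \<and> \<gamma> t \<in> M" using d \<gamma> assms(2) by (cases "t = 0") (force simp: dist_real_def)+
    then show "(F \<circ> \<gamma>) t = (f \<circ> \<gamma>) t" using assms(3) by simp
  qed (use d \<gamma> in auto)
qed

lemma dM_eq_derivative:
  fixes F :: "real^'n \<Rightarrow> 'b::real_normed_vector"
  assumes "open U" "p \<in> U" "\<forall>x\<in>M \<inter> U. F x = f x" "(F has_derivative F') (at p)"
    and "w \<in> tangent_space M p"
  shows "dM M f p w = F' w"
  unfolding dM_def
proof (rule the_equality)
  show "\<forall>\<gamma> \<epsilon>. curve_in M p \<gamma> \<epsilon> \<and> (\<gamma> has_vector_derivative w) (at 0) \<longrightarrow>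
      ((f \<circ> \<gamma>) has_vector_derivative F' w) (at 0)"
    using curve_comp_has_vector_derivative[OF assms(1-4)] by blast
  fix z assume z: "\<forall>\<gamma> \<epsilon>. curve_in M p \<gamma> \<epsilon> \<and> (\<gamma> has_vector_derivative w) (at 0) \<longrightarrow>
      ((f \<circ> \<gamma>) has_vector_derivative z) (at 0)"
  obtain \<gamma> \<epsilon> where "curve_in M p \<gamma> \<epsilon>" "(\<gamma> has_vector_derivative w) (at 0)"
    using assms(5) unfolding tangent_space_def by auto
  then show "z = F' w"
    using vector_derivative_unique_at z curve_comp_has_vector_derivative[OF assms(1-4)] by blast
qed

lemma smooth_on_M_extension:
  assumes "smooth_on_M M f" "p \<in> M"
  obtains U F F' where "open U" "p \<in> U" "\<forall>x\<in>M \<inter> U. F x = f x" "(F has_derivative F') (at p)"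
  using assms smooth_on_has_derivative unfolding smooth_on_M_def by metis

lemma smooth_on_M_const: "smooth_on_M M (\<lambda>x. c)"
  unfolding smooth_on_M_def using smooth_on_const by blast

lemma smooth_on_M_diff:
  assumes "smooth_on_M M f" "smooth_on_M M g"
  shows "smooth_on_M M (\<lambda>x. f x - g x)"
  unfolding smooth_on_M_def
proof
  fix p assume "p \<in> M"
  then obtain U F V G where "open U" "p \<in> U" "smooth_on U F" "\<forall>x\<in>M \<inter> U. F x = f x"
    and "open V" "p \<in> V" "smooth_on V G" "\<forall>x\<in>M \<inter> V. G x = g x"
    using assms unfolding smooth_on_M_def by meson
  then show "\<exists>W H. open W \<and> p \<in> W \<and> smooth_on W H \<and> (\<forall>x\<in>M \<inter> W. H x = f x - g x)"
    by (intro exI[of _ "U \<inter> V"] exI[of _ "\<lambda>x. F x - G x"])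
       (auto intro: smooth_on_diff smooth_on_subset)
qed

lemma dM_const:
  assumes "w \<in> tangent_space M p"
  shows "dM M (\<lambda>x. c) p w = 0"
  using dM_eq_derivative[where U=UNIV and F="\<lambda>x. c" and f="\<lambda>x. c" and F'="\<lambda>h. 0"] assms by simp

lemma dM_diff:
  assumes "smooth_on_M M f" "smooth_on_M M g" "p \<in> M" "w \<in> tangent_space M p"
  shows "dM M (\<lambda>x. f x - g x) p w = dM M f p w - dM M g p w"
proof -
  obtain U F F' V G G' where F: "open U" "p \<in> U" "\<forall>x\<in>M \<inter> U. F x = f x" "(F has_derivative F') (at p)"
    and G: "open V" "p \<in> V" "\<forall>x\<in>M \<inter> V. G x = g x" "(G has_derivative G') (at p)"
    using smooth_on_M_extension[OF assms(1,3)] smooth_on_M_extension[OF assms(2,3)] by metis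
  have "dM M (\<lambda>x. f x - g x) p w = F' w - G' w"
    using F G assms(4) by (intro dM_eq_derivative[where U="U \<inter> V" and F="\<lambda>x. F x - G x"]) (auto intro: has_derivative_diff)
  then show ?thesis using dM_eq_derivative[OF F assms(4)] dM_eq_derivative[OF G assms(4)] by simp
qed

lemma dM_inner:
  assumes "smooth_on_M M f" "smooth_on_M M g" "p \<in> M" "w \<in> tangent_space M p"
  shows "dM M (\<lambda>x. f x \<bullet> g x) p w = dM M f p w \<bullet> g p + f p \<bullet> dM M g p w"
proof -
  obtain U F F' V G G' where F: "open U" "p \<in> U" "\<forall>x\<in>M \<inter> U. F x = f x" "(F has_derivative F') (at p)"
    and G: "open V" "p \<in> V" "\<forall>x\<in>M \<inter> V. G x = g x" "(G has_derivative G') (at p)"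
    using smooth_on_M_extension[OF assms(1,3)] smooth_on_M_extension[OF assms(2,3)] by metis
  have "dM M (\<lambda>x. f x \<bullet> g x) p w = F p \<bullet> G' w + F' w \<bullet> G p"
    using F G assms(4) bounded_bilinear.FDERIV[OF bounded_bilinear_inner F(4) G(4)]
    by (intro dM_eq_derivative[where U="U \<inter> V" and F="\<lambda>x. F x \<bullet> G x"]) auto
  then show ?thesis
    using dM_eq_derivative[OF F assms(4)] dM_eq_derivative[OF G assms(4)] F(2,3) G(2,3) assms(3)
    by (simp add: inner_commute add.commute)
qed

section \<open>Smoothness of the projection onto \<open>E\<close>\<close>

text \<open>The normalising factor is \<open>(u \<bullet> u) powr (-1/2)\<close> rather than \<open>inverse (norm u)\<close> so that
  smoothness reduces to that of \<open>powr\<close> on \<open>(0,\<infinity>)\<close>.\<close>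

definition gram_schmidt_step :: "('x \<Rightarrow> real^'n) \<Rightarrow> ('x \<Rightarrow> real^'n) list \<Rightarrow> 'x \<Rightarrow> real^'n" where
  "gram_schmidt_step f L x =
     (let u = f x - (\<Sum>j<length L. (f x \<bullet> (L!j) x) *\<^sub>R (L!j) x) in (u \<bullet> u) powr (-1/2) *\<^sub>R u)"

primrec gram_schmidt_list :: "(nat \<Rightarrow> 'x \<Rightarrow> real^'n) \<Rightarrow> nat \<Rightarrow> ('x \<Rightarrow> real^'n) list" where
  "gram_schmidt_list a 0 = []"
| "gram_schmidt_list a (Suc i) =
     gram_schmidt_list a i @ [gram_schmidt_step (a i) (gram_schmidt_list a i)]"

definition gram_schmidt :: "(nat \<Rightarrow> 'x \<Rightarrow> real^'n) \<Rightarrow> nat \<Rightarrow> 'x \<Rightarrow> real^'n" where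
  "gram_schmidt a i = gram_schmidt_list a (Suc i) ! i"

lemma length_gram_schmidt_list [simp]: "length (gram_schmidt_list a i) = i"
  by (induction i) auto

lemma nth_gram_schmidt_list: "j < i \<Longrightarrow> gram_schmidt_list a i ! j = gram_schmidt a j"
  by (induction i) (auto simp: gram_schmidt_def nth_append less_Suc_eq)

lemma gram_schmidt_rec:
  "gram_schmidt a i x =
     (let u = a i x - (\<Sum>j<i. (a i x \<bullet> gram_schmidt a j x) *\<^sub>R gram_schmidt a j x)
      in (u \<bullet> u) powr (-1/2) *\<^sub>R u)"
proof -
  have "gram_schmidt a i = gram_schmidt_step (a i) (gram_schmidt_list a i)"
    by (simp add: gram_schmidt_def nth_append)
  then show ?thesis by (simp add: gram_schmidt_step_def nth_gram_schmidt_list)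
qed

lemma gram_schmidt_orthonormal_span:
  fixes a :: "nat \<Rightarrow> 'x \<Rightarrow> real^'n"
  assumes "\<forall>i<k. a i q \<notin> span ((\<lambda>j. a j q) ` {..<i})" "i \<le> k"
  shows "(\<forall>j<i. \<forall>l<i. gram_schmidt a j q \<bullet> gram_schmidt a l q = (if j = l then 1 else 0)) \<and>
    span ((\<lambda>j. gram_schmidt a j q) ` {..<i}) = span ((\<lambda>j. a j q) ` {..<i})"
  using assms(2)
proof (induction i)
  case 0
  then show ?case by simp
next
  case (Suc i)
  let ?e = "\<lambda>j. gram_schmidt a j q"
  define s where "s = (\<Sum>j<i. (a i q \<bullet> ?e j) *\<^sub>R ?e j)"
  define u where "u = a i q - s"
  from Suc have orth: "\<forall>j<i. \<forall>l<i. ?e j \<bullet> ?e l = (if j = l then 1 else 0)"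
    and span_eq: "span (?e ` {..<i}) = span ((\<lambda>j. a j q) ` {..<i})" and "i < k"
    by auto
  have s: "s \<in> span (?e ` {..<i})"
    unfolding s_def by (intro span_sum span_scale span_base) auto
  then have "u \<noteq> 0" using assms(1) \<open>i < k\<close> span_eq by (auto simp: u_def)
  have e_i: "?e i = inverse (norm u) *\<^sub>R u"
    using gram_schmidt_rec[of a i q] \<open>u \<noteq> 0\<close>
    by (simp add: u_def s_def Let_def norm_eq_sqrt_inner powr_minus powr_half_sqrt[symmetric])
  have "u \<bullet> ?e l = 0" if "l < i" for l
    using inner_residual_orthonormal[OF orth that] by (simp add: u_def s_def)
  then have "?e i \<bullet> ?e l = 0 \<and> ?e l \<bullet> ?e i = 0" if "l < i" for l
    using that e_i by (simp add: inner_commute)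
  moreover have "?e i \<bullet> ?e i = 1"
    using e_i \<open>u \<noteq> 0\<close> by (simp add: power2_norm_eq_inner[symmetric])
  ultimately have "\<forall>j<Suc i. \<forall>l<Suc i. ?e j \<bullet> ?e l = (if j = l then 1 else 0)"
    using orth by (auto simp: less_Suc_eq)
  moreover have "span (insert (?e i) (?e ` {..<i})) = span (insert (a i q) (?e ` {..<i}))"
  proof -
    have "u - a i q \<in> span (?e ` {..<i})" using s by (simp add: u_def span_neg)
    then have "span (insert u (?e ` {..<i})) = span (insert (a i q) (?e ` {..<i}))"
      by (rule eq_span_insert_eq)
    then show ?thesis using e_i \<open>u \<noteq> 0\<close> by (simp add: span_insert_scaleR)
  qed
  then have "span (?e ` {..<Suc i}) = span ((\<lambda>j. a j q) ` {..<Suc i})"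
    using span_eq by (simp add: lessThan_Suc span_insert)
  ultimately show ?case by blast
qed

lemma smooth_on_normalized_near:
  fixes u :: "'a::real_normed_vector \<Rightarrow> real^'n"
  assumes "open V" "p \<in> V" "smooth_on V u" "u p \<noteq> 0"
  shows "\<exists>V'. open V' \<and> p \<in> V' \<and> V' \<subseteq> V \<and> smooth_on V' (\<lambda>x. (u x \<bullet> u x) powr (-1/2) *\<^sub>R u x)"
proof (intro exI conjI)
  let ?V' = "V \<inter> (\<lambda>x. u x \<bullet> u x) -` {0<..}"
  show "open ?V'"
    using assms(1) smooth_on_continuous_on[OF smooth_on_inner[OF assms(3) assms(3)]]
    by (intro continuous_open_preimage) auto
  show "p \<in> ?V'" using assms(2,4) by simp
  have "smooth_on ?V' u" using assms(3) by (rule smooth_on_subset) blast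
  then show "smooth_on ?V' (\<lambda>x. (u x \<bullet> u x) powr (-1/2) *\<^sub>R u x)"
    by (intro smooth_on_scaleR smooth_on_powr smooth_on_inner) auto
qed blast

lemma gram_schmidt_smooth_near:
  fixes a :: "nat \<Rightarrow> 'a::real_normed_vector \<Rightarrow> real^'n"
  assumes "open W" "p \<in> W" "\<forall>i<k. smooth_on W (a i)"
    and "\<forall>i<k. a i p \<notin> span ((\<lambda>j. a j p) ` {..<i})"
  shows "\<exists>V. open V \<and> p \<in> V \<and> V \<subseteq> W \<and> (\<forall>j<k. smooth_on V (gram_schmidt a j))"
  using assms(3,4)
proof (induction k)
  case 0
  then show ?case using assms(1,2) by blast
next
  case (Suc k)
  then obtain V where V: "open V" "p \<in> V" "V \<subseteq> W" "\<forall>j<k. smooth_on V (gram_schmidt a j)"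
    by auto
  define u where "u x = a k x - (\<Sum>j<k. (a k x \<bullet> gram_schmidt a j x) *\<^sub>R gram_schmidt a j x)" for x
  have "smooth_on V (a k)" using Suc.prems(1) V(3) smooth_on_subset by blast
  then have "smooth_on V u"
    unfolding u_def using V(4) by (intro smooth_on_diff smooth_on_sum smooth_on_scaleR smooth_on_inner) auto
  moreover have "u p \<noteq> 0"
  proof
    assume "u p = 0"
    then have "a k p = (\<Sum>j<k. (a k p \<bullet> gram_schmidt a j p) *\<^sub>R gram_schmidt a j p)"
      by (simp add: u_def)
    also have "\<dots> \<in> span ((\<lambda>j. gram_schmidt a j p) ` {..<k})"
      by (intro span_sum span_scale span_base) auto
    also have "\<dots> = span ((\<lambda>j. a j p) ` {..<k})"
      using gram_schmidt_orthonormal_span[of "Suc k" a p k] Suc.prems(2) by auto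
    finally show False using Suc.prems(2) by auto
  qed
  ultimately obtain V' where V': "open V'" "p \<in> V'" "V' \<subseteq> V"
    "smooth_on V' (\<lambda>x. (u x \<bullet> u x) powr (-1/2) *\<^sub>R u x)"
    using smooth_on_normalized_near[OF V(1,2)] by blast
  moreover have "gram_schmidt a k = (\<lambda>x. (u x \<bullet> u x) powr (-1/2) *\<^sub>R u x)"
    by (rule ext) (simp add: gram_schmidt_rec[of a k] u_def Let_def)
  ultimately have "smooth_on V' (gram_schmidt a k)" by simp
  moreover have "\<forall>j<k. smooth_on V' (gram_schmidt a j)" using V(4) V'(3) smooth_on_subset by blast
  ultimately show ?case using V(3) V'(1-3) by (intro exI[of _ V']) (auto simp: less_Suc_eq)
qed

lemma subbundle_subspace: "subbundle M E \<Longrightarrow> p \<in> M \<Longrightarrow> subspace (E p)"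
  unfolding subbundle_def by blast

lemma subbundle_subset_tangent_space: "subbundle M E \<Longrightarrow> p \<in> M \<Longrightarrow> E p \<subseteq> tangent_space M p"
  unfolding subbundle_def by blast

lemma subbundle_local_ambient_frame:
  fixes M :: "(real^'n) set"
  assumes "subbundle M E" "p \<in> M"
  obtains W k F where "open W" "p \<in> W" "\<forall>i<k. smooth_on W (F i)"
    "\<And>q. q \<in> M \<inter> W \<Longrightarrow> span ((\<lambda>i. F i q) ` {..<k}) = E q \<and> dim (E q) = k"
proof -
  have "\<exists>U k (X :: nat \<Rightarrow> real^'n \<Rightarrow> real^'n). open U \<and> p \<in> U \<and>
      (\<forall>i<k. vector_field M (X i)) \<and> (\<forall>q\<in>M \<inter> U. span {X i q | i. i < k} = E q \<and> dim (E q) = k)"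
    using assms unfolding subbundle_def by simp
  then obtain U k X where U: "open U" "p \<in> U" and "\<forall>i<k. vector_field M (X i)"
    and frame: "\<forall>q\<in>M \<inter> U. span {X i q | i. i < k} = E q \<and> dim (E q) = k"
    by blast
  then have "\<forall>i<k. smooth_on_M M (X i)" unfolding vector_field_def by blast
  then have "\<forall>i<k. \<exists>U F. open U \<and> p \<in> U \<and> smooth_on U F \<and> (\<forall>x\<in>M \<inter> U. F x = X i x)"
    using assms(2) unfolding smooth_on_M_def by blast
  then obtain UU F where UU: "\<forall>i<k. open (UU i) \<and> p \<in> UU i \<and> smooth_on (UU i) (F i) \<and>
      (\<forall>x\<in>M \<inter> UU i. F i x = X i x)"
    by metis
  define W where "W = U \<inter> (\<Inter>i<k. UU i)"
  show thesis
  proof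
    show "open W" unfolding W_def using U UU by auto
    show "p \<in> W" unfolding W_def using U UU by auto
    show "\<forall>i<k. smooth_on W (F i)" unfolding W_def using UU by (auto intro: smooth_on_subset)
    fix q assume "q \<in> M \<inter> W"
    moreover then have "(\<lambda>i. F i q) ` {..<k} = {X i q | i. i < k}"
      unfolding W_def using UU by auto
    ultimately show "span ((\<lambda>i. F i q) ` {..<k}) = E q \<and> dim (E q) = k"
      using frame unfolding W_def by auto
  qed
qed

lemma smooth_on_M_proj_onto_subbundle:
  assumes "subbundle M E"
  shows "smooth_on_M M (\<lambda>p. proj_onto (E p) w)"
  unfolding smooth_on_M_def
proof
  fix p assume "p \<in> M"
  then obtain W k F where W: "open W" "p \<in> W" "\<forall>i<k. smooth_on W (F i)"
    and frame: "\<And>q. q \<in> M \<inter> W \<Longrightarrow> span ((\<lambda>i. F i q) ` {..<k}) = E q \<and> dim (E q) = k"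
    using subbundle_local_ambient_frame[OF assms] by metis
  have indep: "\<forall>i<k. F i q \<notin> span ((\<lambda>j. F j q) ` {..<i})" if "q \<in> M \<inter> W" for q
    using frame[OF that] not_in_span_initial_segment by blast
  obtain V where V: "open V" "p \<in> V" "V \<subseteq> W" "\<forall>j<k. smooth_on V (gram_schmidt F j)"
    using gram_schmidt_smooth_near[OF W indep] \<open>p \<in> M\<close> W(2) by blast
  define P where "P x = (\<Sum>j<k. (w \<bullet> gram_schmidt F j x) *\<^sub>R gram_schmidt F j x)" for x
  have "smooth_on V P"
    unfolding P_def using V(4) by (intro smooth_on_sum smooth_on_scaleR smooth_on_inner smooth_on_const) auto
  moreover have "P x = proj_onto (E x) w" if "x \<in> M \<inter> V" for x
  proof -
    have x: "x \<in> M \<inter> W" using that V(3) by blast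
    have "subspace (E x)" using subbundle_subspace assms x by blast
    then show ?thesis
      unfolding P_def using gram_schmidt_orthonormal_span[of k F x k] indep[OF x] frame[OF x]
        proj_onto_orthonormal_sum[of "E x" "\<lambda>j. gram_schmidt F j x" k w]
      by auto
  qed
  ultimately show "\<exists>U F. open U \<and> p \<in> U \<and> smooth_on U F \<and> (\<forall>x\<in>M \<inter> U. F x = proj_onto (E x) w)"
    using V(1,2) by blast
qed

lemma section_of_proj_onto_subbundle:
  "subbundle M E \<Longrightarrow> section_of M E (\<lambda>p. proj_onto (E p) w)"
  unfolding section_of_def
  using smooth_on_M_proj_onto_subbundle proj_onto_in_orthogonal subbundle_subspace by blast

lemma vector_field_proj_onto_subbundle:
  "subbundle M E \<Longrightarrow> vector_field M (\<lambda>p. proj_onto (E p) w)"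
  unfolding vector_field_def
  using section_of_proj_onto_subbundle[unfolded section_of_def] subbundle_subset_tangent_space
  by blast

lemma normal_section_proj_onto_complement:
  "subbundle M E \<Longrightarrow> normal_section M E (\<lambda>p. w - proj_onto (E p) w)"
  unfolding normal_section_def
  using smooth_on_M_diff[OF smooth_on_M_const smooth_on_M_proj_onto_subbundle]
    proj_onto_in_orthogonal subbundle_subspace by blast

lemma levi_civita_torsion_free:
  "levi_civita M nabla \<Longrightarrow> vector_field M X \<Longrightarrow> vector_field M Y \<Longrightarrow> p \<in> M \<Longrightarrow>
    nabla X Y p - nabla Y X p = lie_bracket M X Y p"
  unfolding levi_civita_def by blast

lemma levi_civita_metric:
  "levi_civita M nabla \<Longrightarrow> vector_field M X \<Longrightarrow> vector_field M Y \<Longrightarrow> vector_field M Z \<Longrightarrow>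
    p \<in> M \<Longrightarrow> dM M (\<lambda>q. Y q \<bullet> Z q) p (X p) = nabla X Y p \<bullet> Z p + Y p \<bullet> nabla X Z p"
  unfolding levi_civita_def by blast

lemma second_fundamental_form_normal:
  "second_fundamental_form M E alpha \<Longrightarrow> m \<in> M \<Longrightarrow> x \<in> E m \<Longrightarrow> y \<in> E m \<Longrightarrow> e \<in> E m \<Longrightarrow>
    alpha m x y \<bullet> e = 0"
  unfolding second_fundamental_form_def by blast

lemma second_fundamental_form_pairing:
  "second_fundamental_form M E alpha \<Longrightarrow> section_of M E X \<Longrightarrow> section_of M E Y \<Longrightarrow>
    normal_section M E N \<Longrightarrow> m \<in> M \<Longrightarrow>
    alpha m (X m) (Y m) \<bullet> N m = proj_onto (E m) (dM M N m (X m)) \<bullet> Y m"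
  unfolding second_fundamental_form_def by blast

lemma levi_civita_inner_self:
  assumes "levi_civita M nabla" "vector_field M X" "vector_field M Y" "m \<in> M"
  shows "nabla X Y m \<bullet> X m = dM M Y m (X m) \<bullet> X m"
proof -
  have smooth: "smooth_on_M M X" and "Y m \<in> tangent_space M m"
    using assms(2-4) unfolding vector_field_def by auto
  have "nabla Y X m \<bullet> X m + X m \<bullet> nabla Y X m = dM M (\<lambda>q. X q \<bullet> X q) m (Y m)"
    using levi_civita_metric[OF assms(1,3,2,2,4)] by simp
  also have "\<dots> = dM M X m (Y m) \<bullet> X m + X m \<bullet> dM M X m (Y m)"
    using dM_inner[OF smooth smooth assms(4) \<open>Y m \<in> _\<close>] .
  finally have "nabla Y X m \<bullet> X m = dM M X m (Y m) \<bullet> X m" by (simp add: inner_commute)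
  moreover have "nabla X Y m = nabla Y X m + (dM M Y m (X m) - dM M X m (Y m))"
    using levi_civita_torsion_free[OF assms(1,2,3,4)] unfolding lie_bracket_def
    by (simp add: algebra_simps)
  ultimately show ?thesis by (simp add: inner_add_left inner_diff_left)
qed

lemma second_fundamental_form_inner:
  assumes "subbundle M E" "second_fundamental_form M E alpha" "m \<in> M" "b \<in> E m"
  shows "alpha m b b \<bullet> v = - (dM M (\<lambda>p. proj_onto (E p) v) m b \<bullet> b)"
proof -
  let ?P = "\<lambda>w p. proj_onto (E p) w"
  have sub: "subspace (E m)" and b: "b \<in> tangent_space M m"
    using assms subbundle_subspace subbundle_subset_tangent_space by blast+
  have "?P b m = b" using proj_onto_self[OF sub assms(4)] .
  then have "alpha m b b \<bullet> (v - ?P v m) = proj_onto (E m) (dM M (\<lambda>p. v - ?P v p) m b) \<bullet> b"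
    using second_fundamental_form_pairing[OF assms(2) section_of_proj_onto_subbundle[OF assms(1)]
      section_of_proj_onto_subbundle[OF assms(1)] normal_section_proj_onto_complement[OF assms(1)] assms(3)]
    by metis
  also have "\<dots> = dM M (\<lambda>p. v - ?P v p) m b \<bullet> b" using proj_onto_inner[OF sub assms(4)] .
  also have "\<dots> = - (dM M (?P v) m b \<bullet> b)"
    using dM_diff[OF smooth_on_M_const smooth_on_M_proj_onto_subbundle[OF assms(1)] assms(3) b]
      dM_const[OF b, of v] by simp
  moreover have "alpha m b b \<bullet> ?P v m = 0"
    using second_fundamental_form_normal[OF assms(2,3,4,4)] proj_onto_in_orthogonal[OF sub] by blast
  ultimately show ?thesis by (simp add: inner_diff_right)
qed

lemma div_E_eq_sum:
  assumes "subbundle M E" "levi_civita M nabla" "vector_field M Y" "m \<in> M"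
  shows "div_E M E nabla Y m = (\<Sum>b\<in>(SOME B. onb (E m) B). dM M Y m b \<bullet> b)"
  unfolding div_E_def Let_def
proof (rule sum.cong[OF refl])
  have sub: "subspace (E m)" using subbundle_subspace[OF assms(1,4)] .
  fix b assume "b \<in> (SOME B. onb (E m) B)"
  then have b: "b \<in> E m" using onb_some[OF sub] unfolding onb_def by blast
  have "\<exists>X. vector_field M X \<and> X m = b"
    using vector_field_proj_onto_subbundle[OF assms(1)] proj_onto_self[OF sub b] by blast
  then obtain X where X: "X = (SOME X. vector_field M X \<and> X m = b)" "vector_field M X" "X m = b"
    by (metis (mono_tags, lifting) someI_ex)
  have "proj_onto (E m) (nabla X Y m) \<bullet> b = dM M Y m b \<bullet> b"
    using proj_onto_inner[OF sub b] levi_civita_inner_self[OF assms(2) X(2) assms(3,4)] X(3) by simp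
  then show "proj_onto (E m) (nabla (SOME X. vector_field M X \<and> X m = b) Y m) \<bullet> b = dM M Y m b \<bullet> b"
    using X(1) by simp
qed

theorem mainTheorem3:
  fixes M :: "(real^'n) set" and d :: nat
    and E :: "real^'n \<Rightarrow> (real^'n) set"
    and nabla :: "(real^'n \<Rightarrow> real^'n) \<Rightarrow> (real^'n \<Rightarrow> real^'n) \<Rightarrow> real^'n \<Rightarrow> real^'n"
    and alpha :: "real^'n \<Rightarrow> real^'n \<Rightarrow> real^'n \<Rightarrow> real^'n"
  assumes "embedded_submanifold M d"
    and "subbundle M E"
    and "involutive_subbundle M E"
    and "levi_civita M nabla"
    and "second_fundamental_form M E alpha"
    and "m \<in> M"
  shows "mean_curvature E alpha m \<bullet> v = - div_E M E nabla (\<lambda>p. proj_onto (E p) v) m"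
proof -
  let ?B = "SOME B. onb (E m) B"
  have B: "?B \<subseteq> E m" using onb_some[OF subbundle_subspace[OF assms(2,6)]] unfolding onb_def by blast
  have "mean_curvature E alpha m \<bullet> v = (\<Sum>b\<in>?B. alpha m b b \<bullet> v)"
    unfolding mean_curvature_def Let_def by (simp add: inner_sum_left)
  also have "\<dots> = - (\<Sum>b\<in>?B. dM M (\<lambda>p. proj_onto (E p) v) m b \<bullet> b)"
    using second_fundamental_form_inner[OF assms(2,5,6)] B by (simp add: subset_iff sum_negf)
  also have "\<dots> = - div_E M E nabla (\<lambda>p. proj_onto (E p) v) m"
    using div_E_eq_sum[OF assms(2,4) vector_field_proj_onto_subbundle[OF assms(2)] assms(6)] by simp
  finally show ?thesis .
qed

end
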